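(* Let $f(w)=\frac12 w^TAw-b^Tw+c$ with $A\in\mathbb{R}^{n\times n}$ symmetric positive definite, $b\in\mathbb{R}^n$, $c\in\mathbb{R}$. Let $x^k\in\mathbb{R}^n$ with $\nabla f(x^k)\ne 0$, let $t_k=\frac{2\|\nabla f(x^k)\|^2}{\nabla f(x^k)^TA\nabla f(x^k)}$ and $y^k=x^k-t_k\nabla f(x^k)$, and assume $\nabla f(x^k)$ and $\nabla f(y^k)$ are linearly independent. Let $g_x=\nabla f(x^k)$, $g_y=\nabla f(y^k)$, and define $$\Delta_k=\langle g_y,Ag_y\rangle\langle g_x,Ag_x\rangle-\langle g_x,Ag_y\rangle^2,$$ $$\alpha_k=\frac{\langle g_y,g_x\rangle\langle g_x,Ag_y\rangle-\langle g_x,g_x\rangle\langle g_y,Ag_y\rangle}{\Delta_k},\qquad \beta_k=\frac{-\langle g_y,g_x\rangle\langle g_x,Ag_x\rangle+\langle g_x,g_x\rangle\langle g_y,Ag_x\rangle}{\Delta_k},$$ and $x^{k+1}=x^k+\alpha_kg_x+\beta_kg_y$. Let $\Pi_k=\{x^k+\alpha g_x+\beta g_y:\alpha,\beta\in\mathbb{R}\}$ and $L_k=\{x\in\mathbb{R}^n: f(x)=f(x^k)\}$, and $E_k=\Pi_k\cap L_k$. Then: $\Delta_k>0$; $E_k$ is an ellipse contained in the two-dimensional affine plane $\Pi_k$ which contains $x^k$ and $y^k$, with $E_k$ orthogonal to $g_x$ at $x^k$ (i.e., $g_x$ is orthogonal to the tangent line of $E_k$ at $x^k$) and orthogonal to $g_y$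 at $y^k$; and $x^{k+1}$ is both the unique minimizer of $f$ on $\Pi_k$ and the center of the ellipse $E_k$.
   Context: $\langle u,v\rangle=u^Tv$, $\|\cdot\|$ the Euclidean norm, $\nabla f(w)=Aw-b$. *)

theory Defs
  imports "HOL-Analysis.Analysis"
begin

definition quad_f :: "real^'n^'n \<Rightarrow> real^'n \<Rightarrow> real \<Rightarrow> real^'n \<Rightarrow> real" where
  "quad_f A b c w = (1/2) * (w \<bullet> (A *v w)) - b \<bullet> w + c"

definition quad_grad :: "real^'n^'n \<Rightarrow> real^'n \<Rightarrow> real^'n \<Rightarrow> real^'n" where
  "quad_grad A b w = A *v w - b"

definition pos_def :: "real^'n^'n \<Rightarrow> bool" where
  "pos_def A \<longleftrightarrow> transpose A = A \<and> (\<forall>x. x \<noteq> 0 \<longrightarrow> x \<bullet> (A *v x) > 0)"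

text \<open>E is a (non-degenerate) ellipse in R^n with centre z: the image of the unit circle
  under an injective affine map of R^2, i.e. z + cos t e1 + sin t e2 with e1, e2 linearly independent.\<close>
definition ellipse_with_center :: "(real^'n) set \<Rightarrow> real^'n \<Rightarrow> bool" where
  "ellipse_with_center E z \<longleftrightarrow>
     (\<exists>e1 e2. (\<forall>a b. a *\<^sub>R e1 + b *\<^sub>R e2 = 0 \<longrightarrow> a = 0 \<and> b = 0) \<and>
              E = range (\<lambda>t. z + cos t *\<^sub>R e1 + sin t *\<^sub>R e2))"

definition is_ellipse :: "(real^'n) set \<Rightarrow> bool" where
  "is_ellipse E \<longleftrightarrow> (\<exists>z. ellipse_with_center E z)"

definition tangent_vec :: "(real^'n) set \<Rightarrow> real^'n \<Rightarrow> real^'n \<Rightarrow> bool" where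
  "tangent_vec E p v \<longleftrightarrow>
     (\<exists>\<gamma>::real \<Rightarrow> real^'n. \<gamma> 0 = p \<and> (\<forall>t. \<gamma> t \<in> E) \<and> (\<gamma> has_vector_derivative v) (at 0))"

definition orthogonal_at :: "(real^'n) set \<Rightarrow> real^'n \<Rightarrow> real^'n \<Rightarrow> bool" where
  "orthogonal_at E p g \<longleftrightarrow> p \<in> E \<and> (\<exists>v. v \<noteq> 0 \<and> tangent_vec E p v) \<and>
     (\<forall>v. tangent_vec E p v \<longrightarrow> g \<bullet> v = 0)"

end

theory Submission
  imports Defs
begin

(* On the plane Pi_k, f is a positive definite quadratic in the coordinates along g_x, g_y.
   Delta_k is the Gram determinant of g_x, g_y in the inner product of A, and (alpha_k, beta_k)
   solves the 2x2 system "gradient orthogonal to g_x and to g_y" by Cramer's rule. So the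
   gradient at x^{k+1} is orthogonal to the plane, f(x^{k+1} + v) = f(x^{k+1}) + v^T A v / 2 for v
   parallel to it, x^{k+1} is the strict minimiser on Pi_k, and each level set above the minimum
   is a circle of the A-inner product centred at x^{k+1}, i.e. an ellipse. The step t_k is twice
   the exact line-search step, so f(y^k) = f(x^k) and y^k lies on E_k with x^k. As f is constant
   along E_k, the chain rule makes its gradient orthogonal to every tangent vector. *)

lemma span_pair: "span {g, h} = {a *\<^sub>R g + b *\<^sub>R h | a b. True}"
  by (auto simp: span_insert span_singleton algebra_simps)

definition plane_through :: "real^'n \<Rightarrow> real^'n \<Rightarrow> real^'n \<Rightarrow> (real^'n) set" where
  "plane_through x g h = {x + a *\<^sub>R g + b *\<^sub>R h | a b. True}"

lemma plane_through_eq_translation: "plane_through x g h = (+) x ` span {g, h}"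
  unfolding plane_through_def span_pair by (auto simp: add.assoc)

lemma plane_through_recenter:
  "plane_through (x + \<alpha> *\<^sub>R g + \<beta> *\<^sub>R h) g h = plane_through x g h"
proof -
  have "x + \<alpha> *\<^sub>R g + \<beta> *\<^sub>R h + a *\<^sub>R g + b *\<^sub>R h = x + (\<alpha> + a) *\<^sub>R g + (\<beta> + b) *\<^sub>R h"
    and "x + a *\<^sub>R g + b *\<^sub>R h = x + \<alpha> *\<^sub>R g + \<beta> *\<^sub>R h + (a - \<alpha>) *\<^sub>R g + (b - \<beta>) *\<^sub>R h"
    for a b by (simp_all add: algebra_simps)
  then show ?thesis unfolding plane_through_def by blast
qed

lemma aff_dim_plane_through:
  fixes x g h :: "real^'n"
  assumes li: "\<forall>a1 a2. a1 *\<^sub>R g + a2 *\<^sub>R h = 0 \<longrightarrow> a1 = 0 \<and> a2 = 0"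
  shows "aff_dim (plane_through x g h) = 2"
proof -
  have "h \<noteq> 0" "g \<noteq> h" using li[rule_format, of 0 1] li[rule_format, of 1 "-1"] by auto
  moreover have "g \<notin> span {h}"
  proof
    assume "g \<in> span {h}"
    then obtain k where "g = k *\<^sub>R h" by (auto simp: span_singleton)
    then show False using li[rule_format, of 1 "-k"] by auto
  qed
  ultimately have "independent {g, h}" by (simp add: independent_insert)
  then have "dim (span {g, h}) = 2"
    using dim_eq_card_independent \<open>g \<noteq> h\<close> by fastforce
  then show ?thesis
    by (simp add: plane_through_eq_translation aff_dim_translation_eq aff_dim_subspace)
qed

lemma inner_matrix_vector_commute:
  fixes A :: "real^'n^'n"
  assumes "transpose A = A"
  shows "x \<bullet> (A *v y) = y \<bullet> (A *v x)"
  by (metis assms dot_lmul_matrix inner_commute transpose_matrix_vector)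

lemma quad_grad_add: "quad_grad A b (x + v) = quad_grad A b x + A *v v"
  by (simp add: quad_grad_def matrix_vector_right_distrib)

lemma quad_f_add:
  fixes A :: "real^'n^'n"
  assumes "transpose A = A"
  shows "quad_f A b c (x + v) = quad_f A b c x + quad_grad A b x \<bullet> v + 1/2 * (v \<bullet> (A *v v))"
  using inner_matrix_vector_commute[OF assms, of x v]
  by (simp add: quad_f_def quad_grad_def algebra_simps inner_commute)

lemma quad_form_lincomb:
  fixes A :: "real^'n^'n"
  assumes "transpose A = A"
  shows "(p *\<^sub>R g + q *\<^sub>R h) \<bullet> (A *v (p *\<^sub>R g + q *\<^sub>R h))
     = p^2 * (g \<bullet> (A *v g)) + 2 * p * q * (g \<bullet> (A *v h)) + q^2 * (h \<bullet> (A *v h))"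
  using inner_matrix_vector_commute[OF assms, of g h]
  by (simp add: algebra_simps power2_eq_square)

lemma has_derivative_quad_f:
  fixes A :: "real^'n^'n"
  assumes sym: "transpose A = A"
  shows "(quad_f A b c has_derivative (\<lambda>v. quad_grad A b x \<bullet> v)) (at x)"
  unfolding quad_f_def[abs_def]
  by (rule has_derivative_eq_rhs,
      (rule derivative_eq_intros bounded_linear.has_derivative[OF matrix_vector_mul_bounded_linear] refl)+)
    (use inner_matrix_vector_commute[OF sym, of x] in
      \<open>simp add: quad_grad_def inner_diff_right inner_commute\<close>)

lemma pos_def_gram_det_pos:
  fixes A :: "real^'n^'n"
  assumes pd: "pos_def A"
    and li: "\<forall>a1 a2. a1 *\<^sub>R g + a2 *\<^sub>R h = 0 \<longrightarrow> a1 = 0 \<and> a2 = 0"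
  shows "(h \<bullet> (A *v h)) * (g \<bullet> (A *v g)) - (g \<bullet> (A *v h))^2 > 0"
proof -
  have sym: "transpose A = A" and pos: "\<And>x. x \<noteq> 0 \<Longrightarrow> x \<bullet> (A *v x) > 0"
    using pd unfolding pos_def_def by auto
  define G11 where "G11 = g \<bullet> (A *v g)"
  define G12 where "G12 = g \<bullet> (A *v h)"
  define G22 where "G22 = h \<bullet> (A *v h)"
  have "g \<noteq> 0" using li[rule_format, of 1 0] by auto
  then have G11: "G11 > 0" using pos by (simp add: G11_def)
  \<comment> \<open>The form at \<open>s g + h\<close>, for this s, is the determinant divided by G11.\<close>
  define s where "s = - G12 / G11"
  have "s *\<^sub>R g + 1 *\<^sub>R h \<noteq> 0" using li[rule_format, of s 1] by auto
  then have "(s *\<^sub>R g + 1 *\<^sub>R h) \<bullet> (A *v (s *\<^sub>R g + 1 *\<^sub>R h)) > 0" by (rule pos)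
  then have "s^2 * G11 + 2 * s * G12 + G22 > 0"
    unfolding quad_form_lincomb[OF sym] by (simp add: G11_def G12_def G22_def)
  moreover have "G11 * (s^2 * G11 + 2 * s * G12 + G22) = G22 * G11 - G12^2"
    using G11 by (simp add: s_def field_simps power2_eq_square)
  ultimately show ?thesis using G11 mult_pos_pos by (fastforce simp: G11_def G12_def G22_def)
qed

lemma quad_grad_Cramer_orthogonal:
  fixes A :: "real^'n^'n"
  assumes sym: "transpose A = A"
    and g0: "g0 = quad_grad A b x"
    and D: "D = (h \<bullet> (A *v h)) * (g \<bullet> (A *v g)) - (g \<bullet> (A *v h))^2" "D \<noteq> 0"
    and \<alpha>: "\<alpha> = ((h \<bullet> g0) * (g \<bullet> (A *v h)) - (g \<bullet> g0) * (h \<bullet> (A *v h))) / D"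
    and \<beta>: "\<beta> = (- (h \<bullet> g0) * (g \<bullet> (A *v g)) + (g \<bullet> g0) * (h \<bullet> (A *v g))) / D"
  shows "quad_grad A b (x + \<alpha> *\<^sub>R g + \<beta> *\<^sub>R h) \<bullet> g = 0"
    and "quad_grad A b (x + \<alpha> *\<^sub>R g + \<beta> *\<^sub>R h) \<bullet> h = 0"
proof -
  define G11 where "G11 = g \<bullet> (A *v g)"
  define G12 where "G12 = g \<bullet> (A *v h)"
  define G22 where "G22 = h \<bullet> (A *v h)"
  have G21: "h \<bullet> (A *v g) = G12"
    unfolding G12_def by (rule inner_matrix_vector_commute[OF sym])
  have grad: "quad_grad A b (x + \<alpha> *\<^sub>R g + \<beta> *\<^sub>R h) = g0 + \<alpha> *\<^sub>R (A *v g) + \<beta> *\<^sub>R (A *v h)"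
    unfolding add.assoc quad_grad_add g0
    by (simp add: matrix_vector_right_distrib matrix_vector_mult_scaleR)
  have "quad_grad A b (x + \<alpha> *\<^sub>R g + \<beta> *\<^sub>R h) \<bullet> g = g \<bullet> g0 + \<alpha> * G11 + \<beta> * G12"
    unfolding grad inner_add_left inner_scaleR_left G11_def G12_def
    by (simp add: inner_commute[of g0] inner_commute[of "A *v g"] inner_commute[of "A *v h"])
  also have "\<dots> = 0"
    using D(2) unfolding \<alpha> \<beta> D(1) G21 G11_def[symmetric] G12_def[symmetric] G22_def[symmetric]
    by (simp add: field_simps power2_eq_square)
  finally show "quad_grad A b (x + \<alpha> *\<^sub>R g + \<beta> *\<^sub>R h) \<bullet> g = 0" .
  have "quad_grad A b (x + \<alpha> *\<^sub>R g + \<beta> *\<^sub>R h) \<bullet> h = h \<bullet> g0 + \<alpha> * G12 + \<beta> * G22"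
    unfolding grad inner_add_left inner_scaleR_left G21[symmetric] G22_def
    by (simp add: inner_commute[of g0] inner_commute[of "A *v g"] inner_commute[of "A *v h"])
  also have "\<dots> = 0"
    using D(2) unfolding \<alpha> \<beta> D(1) G21 G11_def[symmetric] G12_def[symmetric] G22_def[symmetric]
    by (simp add: field_simps power2_eq_square)
  finally show "quad_grad A b (x + \<alpha> *\<^sub>R g + \<beta> *\<^sub>R h) \<bullet> h = 0" .
qed

lemma quad_f_add_critical_plane:
  fixes A :: "real^'n^'n"
  assumes sym: "transpose A = A"
    and crit: "quad_grad A b z \<bullet> g = 0" "quad_grad A b z \<bullet> h = 0"
    and v: "v \<in> span {g, h}"
  shows "quad_f A b c (z + v) = quad_f A b c z + 1/2 * (v \<bullet> (A *v v))"
proof -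
  have "quad_grad A b z \<bullet> v = 0"
    using v crit by (auto simp: span_pair inner_add_right)
  then show ?thesis by (simp add: quad_f_add[OF sym])
qed

lemma quad_f_strict_min_plane_through:
  fixes A :: "real^'n^'n"
  assumes pd: "pos_def A"
    and crit: "quad_grad A b z \<bullet> g = 0" "quad_grad A b z \<bullet> h = 0"
    and x: "x \<in> plane_through z g h" "x \<noteq> z"
  shows "quad_f A b c z < quad_f A b c x"
proof -
  have sym: "transpose A = A" using pd by (simp add: pos_def_def)
  obtain v where v: "v \<in> span {g, h}" "x = z + v"
    using x(1) by (auto simp: plane_through_eq_translation)
  with x(2) have "v \<bullet> (A *v v) > 0" using pd by (auto simp: pos_def_def)
  then show ?thesis using quad_f_add_critical_plane[OF sym crit v(1)] v(2) by simp
qed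

lemma quad_f_double_Cauchy_step:
  fixes A :: "real^'n^'n"
  assumes sym: "transpose A = A" and g: "g = quad_grad A b x"
  shows "quad_f A b c (x - (2 * (norm g)^2 / (g \<bullet> (A *v g))) *\<^sub>R g) = quad_f A b c x"
proof (cases "g \<bullet> (A *v g) = 0")
  case False
  define t where "t = 2 * (norm g)^2 / (g \<bullet> (A *v g))"
  have "quad_f A b c (x + (- t) *\<^sub>R g)
      = quad_f A b c x - t * (g \<bullet> g) + t * (t * (g \<bullet> (A *v g))) / 2"
    unfolding quad_f_add[OF sym] g[symmetric]
    by (simp del: scaleR_minus_left add: matrix_vector_mult_scaleR)
  also have "t * (g \<bullet> (A *v g)) = 2 * (g \<bullet> g)"
    using False by (simp add: t_def power2_norm_eq_inner)
  finally show ?thesis by (simp add: t_def)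
qed simp

lemma pos_def_conjugate_basis:
  fixes A :: "real^'n^'n"
  assumes pd: "pos_def A"
    and li: "\<forall>a1 a2. a1 *\<^sub>R g + a2 *\<^sub>R h = 0 \<longrightarrow> a1 = 0 \<and> a2 = 0"
    and r: "r > 0"
  obtains e1 e2 where "span {e1, e2} = span {g, h}"
    and "e1 \<bullet> (A *v e1) = r" "e2 \<bullet> (A *v e2) = r" "e1 \<bullet> (A *v e2) = 0"
proof -
  have pos: "\<And>x. x \<noteq> 0 \<Longrightarrow> x \<bullet> (A *v x) > 0"
    using pd unfolding pos_def_def by auto
  \<comment> \<open>Gram-Schmidt in the inner product of A, followed by rescaling.\<close>
  define k where "k = (g \<bullet> (A *v h)) / (g \<bullet> (A *v g))"
  define f where "f = h - k *\<^sub>R g"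
  have "g \<noteq> 0" "f \<noteq> 0"
    using li[rule_format, of 1 0] li[rule_format, of "-k" 1] by (auto simp: f_def)
  then have Gg: "g \<bullet> (A *v g) > 0" and Gf: "f \<bullet> (A *v f) > 0" by (simp_all add: pos)
  have gAf: "g \<bullet> (A *v f) = 0"
    using Gg by (simp add: f_def k_def matrix_vector_mult_diff_distrib matrix_vector_mult_scaleR
        inner_diff_right)
  define c1 where "c1 = sqrt (r / (g \<bullet> (A *v g)))"
  define c2 where "c2 = sqrt (r / (f \<bullet> (A *v f)))"
  have c1: "c1 > 0" "c1 * c1 * (g \<bullet> (A *v g)) = r"
    using r Gg by (simp_all add: c1_def flip: power2_eq_square)
  have c2: "c2 > 0" "c2 * c2 * (f \<bullet> (A *v f)) = r"
    using r Gf by (simp_all add: c2_def flip: power2_eq_square)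
  show ?thesis
  proof
    have "g = (1 / c1) *\<^sub>R (c1 *\<^sub>R g) + 0 *\<^sub>R (c2 *\<^sub>R f)"
      and "h = (k / c1) *\<^sub>R (c1 *\<^sub>R g) + (1 / c2) *\<^sub>R (c2 *\<^sub>R f)"
      using c1(1) c2(1) by (simp_all add: f_def algebra_simps)
    then have "g \<in> span {c1 *\<^sub>R g, c2 *\<^sub>R f}" "h \<in> span {c1 *\<^sub>R g, c2 *\<^sub>R f}"
      unfolding span_pair by blast+
    moreover have "c1 *\<^sub>R g \<in> span {g, h}" "c2 *\<^sub>R f \<in> span {g, h}"
      by (simp_all add: f_def span_base span_mul span_diff)
    ultimately show "span {c1 *\<^sub>R g, c2 *\<^sub>R f} = span {g, h}"
      by (simp add: span_eq)
    show "(c1 *\<^sub>R g) \<bullet> (A *v (c1 *\<^sub>R g)) = r" "(c2 *\<^sub>R f) \<bullet> (A *v (c2 *\<^sub>R f)) = r"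
      using c1(2) c2(2) by (simp_all add: matrix_vector_mult_scaleR mult.assoc)
    show "(c1 *\<^sub>R g) \<bullet> (A *v (c2 *\<^sub>R f)) = 0"
      by (simp add: matrix_vector_mult_scaleR gAf)
  qed
qed

lemma conjugate_pair_ellipse:
  fixes A :: "real^'n^'n"
  assumes sym: "transpose A = A" and r: "r > 0"
    and e: "e1 \<bullet> (A *v e1) = r" "e2 \<bullet> (A *v e2) = r" "e1 \<bullet> (A *v e2) = 0"
  shows "ellipse_with_center ((+) z ` (span {e1, e2} \<inter> {v. v \<bullet> (A *v v) = r})) z"
proof -
  have form: "(x *\<^sub>R e1 + y *\<^sub>R e2) \<bullet> (A *v (x *\<^sub>R e1 + y *\<^sub>R e2)) = r * (x^2 + y^2)" for x y
    using quad_form_lincomb[OF sym, of x e1 y e2] e by (simp add: algebra_simps)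
  have indep: "\<forall>x y. x *\<^sub>R e1 + y *\<^sub>R e2 = 0 \<longrightarrow> x = 0 \<and> y = 0"
  proof (intro allI impI)
    fix x y assume "x *\<^sub>R e1 + y *\<^sub>R e2 = 0"
    then have "r * (x^2 + y^2) = 0" using form[of x y] by simp
    then show "x = 0 \<and> y = 0" using r by simp
  qed
  have "span {e1, e2} \<inter> {v. v \<bullet> (A *v v) = r} = range (\<lambda>t. cos t *\<^sub>R e1 + sin t *\<^sub>R e2)"
  proof (intro set_eqI iffI)
    fix v assume "v \<in> span {e1, e2} \<inter> {v. v \<bullet> (A *v v) = r}"
    then obtain x y where v: "v = x *\<^sub>R e1 + y *\<^sub>R e2" and "v \<bullet> (A *v v) = r"
      unfolding span_pair by blast
    then have "x^2 + y^2 = 1" using form[of x y] r by simp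
    then obtain t where "x = cos t" "y = sin t" using sincos_total_2pi by metis
    then show "v \<in> range (\<lambda>t. cos t *\<^sub>R e1 + sin t *\<^sub>R e2)" using v by blast
  next
    fix v assume "v \<in> range (\<lambda>t. cos t *\<^sub>R e1 + sin t *\<^sub>R e2)"
    then obtain t where v: "v = cos t *\<^sub>R e1 + sin t *\<^sub>R e2" by blast
    then have "v \<in> span {e1, e2}" unfolding span_pair by blast
    moreover have "v \<bullet> (A *v v) = r" using form[of "cos t" "sin t"] v by simp
    ultimately show "v \<in> span {e1, e2} \<inter> {v. v \<bullet> (A *v v) = r}" by blast
  qed
  then have "(+) z ` (span {e1, e2} \<inter> {v. v \<bullet> (A *v v) = r})
      = range (\<lambda>t. z + cos t *\<^sub>R e1 + sin t *\<^sub>R e2)"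
    by (simp only: image_image add.assoc)
  then show ?thesis
    unfolding ellipse_with_center_def using indep by blast
qed

lemma quad_level_set_plane_ellipse:
  fixes A :: "real^'n^'n"
  assumes pd: "pos_def A"
    and li: "\<forall>a1 a2. a1 *\<^sub>R g + a2 *\<^sub>R h = 0 \<longrightarrow> a1 = 0 \<and> a2 = 0"
    and crit: "quad_grad A b z \<bullet> g = 0" "quad_grad A b z \<bullet> h = 0"
    and K: "quad_f A b c z < K"
  shows "ellipse_with_center (plane_through z g h \<inter> {x. quad_f A b c x = K}) z"
proof -
  have sym: "transpose A = A" using pd by (simp add: pos_def_def)
  define r where "r = 2 * (K - quad_f A b c z)"
  have r: "r > 0" using K by (simp add: r_def)
  obtain e1 e2 where span: "span {e1, e2} = span {g, h}"
    and e: "e1 \<bullet> (A *v e1) = r" "e2 \<bullet> (A *v e2) = r" "e1 \<bullet> (A *v e2) = 0"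
    using pos_def_conjugate_basis[OF pd li r] by blast
  have level: "quad_f A b c (z + v) = K \<longleftrightarrow> v \<bullet> (A *v v) = r" if "v \<in> span {g, h}" for v
    unfolding quad_f_add_critical_plane[OF sym crit that] r_def by (auto simp: field_simps)
  have "plane_through z g h \<inter> {x. quad_f A b c x = K}
      = (+) z ` (span {e1, e2} \<inter> {v. v \<bullet> (A *v v) = r})"
    unfolding plane_through_eq_translation span by (auto simp: level eq_commute[of K])
  then show ?thesis using conjugate_pair_ellipse[OF sym r e] by simp
qed

lemma tangent_vec_level_set_orthogonal:
  fixes A :: "real^'n^'n"
  assumes sym: "transpose A = A"
    and E: "E \<subseteq> {x. quad_f A b c x = K}" and v: "tangent_vec E p v"
  shows "quad_grad A b p \<bullet> v = 0"
proof -
  obtain \<gamma> where \<gamma>: "\<gamma> 0 = p" "\<forall>t. \<gamma> t \<in> E" "(\<gamma> has_derivative (\<lambda>t. t *\<^sub>R v)) (at 0)"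
    using v unfolding tangent_vec_def has_vector_derivative_def by blast
  have "((\<lambda>t. quad_f A b c (\<gamma> t)) has_derivative (\<lambda>t. quad_grad A b p \<bullet> (t *\<^sub>R v))) (at 0)"
    using has_derivative_compose[OF \<gamma>(3) has_derivative_quad_f[OF sym]] \<gamma>(1) by simp
  moreover have "(\<lambda>t. quad_f A b c (\<gamma> t)) = (\<lambda>t. K)" using \<gamma>(2) E by auto
  ultimately have "(\<lambda>t. quad_grad A b p \<bullet> (t *\<^sub>R v)) = (\<lambda>t. 0)"
    using has_derivative_unique has_derivative_const by metis
  then show ?thesis by (metis inner_scaleR_right mult_1)
qed

lemma ellipse_with_center_nonzero_tangent:
  assumes "ellipse_with_center E z" "p \<in> E"
  shows "\<exists>v. v \<noteq> 0 \<and> tangent_vec E p v"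
proof -
  obtain e1 e2 where e: "\<forall>a b. a *\<^sub>R e1 + b *\<^sub>R e2 = 0 \<longrightarrow> a = 0 \<and> b = 0"
    "E = range (\<lambda>t. z + cos t *\<^sub>R e1 + sin t *\<^sub>R e2)"
    using assms(1) unfolding ellipse_with_center_def by blast
  obtain t0 where t0: "p = z + cos t0 *\<^sub>R e1 + sin t0 *\<^sub>R e2" using assms(2) e(2) by blast
  define \<gamma> where "\<gamma> = (\<lambda>t. z + cos (t + t0) *\<^sub>R e1 + sin (t + t0) *\<^sub>R e2)"
  define v where "v = (- sin t0) *\<^sub>R e1 + cos t0 *\<^sub>R e2"
  have "(\<gamma> has_vector_derivative v) (at 0)"
    unfolding \<gamma>_def v_def by (auto intro!: derivative_eq_intros)
  moreover have "\<gamma> 0 = p" "\<forall>t. \<gamma> t \<in> E" using t0 e(2) by (auto simp: \<gamma>_def)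
  moreover have "v \<noteq> 0"
  proof
    assume "v = 0"
    then have "- sin t0 = 0 \<and> cos t0 = 0" using e(1) unfolding v_def by blast
    then show False using sin_cos_squared_add[of t0] by simp
  qed
  ultimately show ?thesis unfolding tangent_vec_def by blast
qed

lemma orthogonal_at_quad_level_ellipse:
  fixes A :: "real^'n^'n"
  assumes sym: "transpose A = A"
    and E: "ellipse_with_center E z" "E \<subseteq> {x. quad_f A b c x = K}" and p: "p \<in> E"
  shows "orthogonal_at E p (quad_grad A b p)"
  unfolding orthogonal_at_def
  using p ellipse_with_center_nonzero_tangent[OF E(1) p] tangent_vec_level_set_orthogonal[OF sym E(2)]
  by blast

theorem mainTheorem2:
  fixes A :: "real^'n^'n" and b xk yk gx gy xk1 :: "real^'n" and c tk Dk \<alpha> \<beta> :: real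
    and P L E :: "(real^'n) set"
  assumes A_pd: "pos_def A"
    and gx_def: "gx = quad_grad A b xk"
    and gx_nz: "gx \<noteq> 0"
    and tk_def: "tk = 2 * (norm gx)^2 / (gx \<bullet> (A *v gx))"
    and yk_def: "yk = xk - tk *\<^sub>R gx"
    and gy_def: "gy = quad_grad A b yk"
    and lin_indep: "\<forall>a1 a2. a1 *\<^sub>R gx + a2 *\<^sub>R gy = 0 \<longrightarrow> a1 = 0 \<and> a2 = 0"
    and Delta_def: "Dk = (gy \<bullet> (A *v gy)) * (gx \<bullet> (A *v gx)) - (gx \<bullet> (A *v gy))^2"
    and alpha_def: "\<alpha> = ((gy \<bullet> gx) * (gx \<bullet> (A *v gy)) - (gx \<bullet> gx) * (gy \<bullet> (A *v gy))) / Dk"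
    and beta_def: "\<beta> = (- (gy \<bullet> gx) * (gx \<bullet> (A *v gx)) + (gx \<bullet> gx) * (gy \<bullet> (A *v gx))) / Dk"
    and xk1_def: "xk1 = xk + \<alpha> *\<^sub>R gx + \<beta> *\<^sub>R gy"
    and Pi_def: "P = {xk + a *\<^sub>R gx + b' *\<^sub>R gy | a b'. True}"
    and L_def: "L = {x. quad_f A b c x = quad_f A b c xk}"
    and E_def: "E = P \<inter> L"
  shows "Dk > 0
    \<and> is_ellipse E \<and> E \<subseteq> P \<and> aff_dim P = 2 \<and> xk \<in> P \<and> yk \<in> P
    \<and> orthogonal_at E xk gx \<and> orthogonal_at E yk gy
    \<and> xk1 \<in> P \<and> (\<forall>x\<in>P. x \<noteq> xk1 \<longrightarrow> quad_f A b c xk1 < quad_f A b c x)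
    \<and> ellipse_with_center E xk1"
proof -
  have sym: "transpose A = A" using A_pd by (simp add: pos_def_def)
  have Dpos: "Dk > 0" using pos_def_gram_det_pos[OF A_pd lin_indep] by (simp add: Delta_def)
  have crit: "quad_grad A b xk1 \<bullet> gx = 0" "quad_grad A b xk1 \<bullet> gy = 0"
    using quad_grad_Cramer_orthogonal[OF sym gx_def Delta_def _ alpha_def beta_def] Dpos
    by (simp_all add: xk1_def)
  have P: "P = plane_through xk1 gx gy"
    unfolding xk1_def plane_through_recenter by (simp add: Pi_def plane_through_def)
  have "xk = xk + 0 *\<^sub>R gx + 0 *\<^sub>R gy" "yk = xk + (- tk) *\<^sub>R gx + 0 *\<^sub>R gy" by (simp_all add: yk_def)
  then have xkP: "xk \<in> P" and ykP: "yk \<in> P" and xk1P: "xk1 \<in> P"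
    unfolding Pi_def xk1_def by blast+
  have minim: "\<forall>x\<in>P. x \<noteq> xk1 \<longrightarrow> quad_f A b c xk1 < quad_f A b c x"
    using quad_f_strict_min_plane_through[OF A_pd crit] P by blast
  have "xk \<noteq> xk1" using crit(1) gx_def gx_nz by auto
  then have "quad_f A b c xk1 < quad_f A b c xk" using minim xkP by blast
  then have ell: "ellipse_with_center E xk1"
    using quad_level_set_plane_ellipse[OF A_pd lin_indep crit] by (simp add: E_def L_def P)
  have level: "E \<subseteq> {x. quad_f A b c x = quad_f A b c xk}" by (simp add: E_def L_def)
  have "yk \<in> E"
    using ykP quad_f_double_Cauchy_step[OF sym gx_def, of c] by (simp add: E_def L_def yk_def tk_def)
  moreover have "xk \<in> E" using xkP by (simp add: E_def L_def)
  ultimately have "orthogonal_at E xk gx" "orthogonal_at E yk gy"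
    using orthogonal_at_quad_level_ellipse[OF sym ell level] gx_def gy_def by blast+
  moreover have "aff_dim P = 2" using aff_dim_plane_through[OF lin_indep] P by simp
  ultimately show ?thesis
    using Dpos ell minim xkP ykP xk1P by (auto simp: is_ellipse_def E_def)
qed

end
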